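(* Let $\alpha>0$ and $\beta\in\mathbb{R}$ satisfy one of: $\beta<\alpha<1$; or $\beta<1<\alpha$; or $\beta<\alpha=1$. Then the essential norm of the $\beta$-Ces\`aro operator $C_\beta:\mathcal{B}_\alpha^0\to\mathcal{B}_\alpha^0$ is $0$.
   Context: $\mathbb{D}=\{z\in\mathbb{C}:|z|<1\}$. For $\alpha>0$, the $\alpha$-Bloch space $\mathcal{B}_\alpha$ is the space of analytic functions $f$ on $\mathbb{D}$ with $\|f\|_{\mathcal{B}_\alpha}:=\sup_{z\in\mathbb{D}}(1-|z|^2)^\alpha|f'(z)|<\infty$. $\mathcal{B}_\alpha^0=\{f\in\mathcal{B}_\alpha: f(0)=0\}$, normed by $\|\cdot\|_{\mathcal{B}_\alpha}$. For $\beta\in\mathbb{R}$, $C_\beta(f)(z)=\int_0^z \frac{f(w)}{w(1-w)^\beta}\,dw$ (principal branch). The essential norm of a bounded operator $T:X\to Y$ between Banach spaces is $\|T\|_e=\inf\{\|T+K\|: K:X\to Y \text{ compact}\}$, $\|\cdot\|$ the operator norm. *)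

theory Defs
  imports "HOL-Complex_Analysis.Complex_Analysis"
begin

text \<open>Functions on the unit disc are modelled as complex \<Rightarrow> complex; only their
values on ball 0 1 matter.\<close>

definition bloch_norm :: "real \<Rightarrow> (complex \<Rightarrow> complex) \<Rightarrow> real" where
  "bloch_norm \<alpha> f = (SUP z\<in>ball 0 1. (1 - (cmod z)^2) powr \<alpha> * cmod (deriv f z))"

definition bloch_space :: "real \<Rightarrow> (complex \<Rightarrow> complex) set" where
  "bloch_space \<alpha> = {f. f holomorphic_on ball 0 1 \<and>
      bdd_above ((\<lambda>z. (1 - (cmod z)^2) powr \<alpha> * cmod (deriv f z)) ` ball 0 1)}"

definition bloch0 :: "real \<Rightarrow> (complex \<Rightarrow> complex) set" where
  "bloch0 \<alpha> = {f \<in> bloch_space \<alpha>. f 0 = 0}"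

definition cesaro :: "real \<Rightarrow> (complex \<Rightarrow> complex) \<Rightarrow> (complex \<Rightarrow> complex)" where
  "cesaro \<beta> f z = contour_integral (linepath 0 z)
      (\<lambda>w. f w / (w * (1 - w) powr (complex_of_real \<beta>)))"

text \<open>Operators on B_alpha^0: maps of functions that are well defined on the quotient
(depend only on values in the disc), map B_alpha^0 into itself and are linear.\<close>
definition op_on_bloch0 :: "real \<Rightarrow> ((complex \<Rightarrow> complex) \<Rightarrow> (complex \<Rightarrow> complex)) \<Rightarrow> bool" where
  "op_on_bloch0 \<alpha> T \<longleftrightarrow>
     (\<forall>f\<in>bloch0 \<alpha>. T f \<in> bloch0 \<alpha>) \<and>
     (\<forall>f\<in>bloch0 \<alpha>. \<forall>g\<in>bloch0 \<alpha>. (\<forall>z\<in>ball 0 1. f z = g z) \<longrightarrow> (\<forall>z\<in>ball 0 1. T f z = T g z)) \<and>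
     (\<forall>f\<in>bloch0 \<alpha>. \<forall>g\<in>bloch0 \<alpha>. \<forall>a b::complex. \<forall>z\<in>ball 0 1.
         T (\<lambda>w. a * f w + b * g w) z = a * T f z + b * T g z)"

definition bounded_op :: "real \<Rightarrow> ((complex \<Rightarrow> complex) \<Rightarrow> (complex \<Rightarrow> complex)) \<Rightarrow> bool" where
  "bounded_op \<alpha> T \<longleftrightarrow> op_on_bloch0 \<alpha> T \<and>
     (\<exists>M. \<forall>f\<in>bloch0 \<alpha>. bloch_norm \<alpha> (T f) \<le> M * bloch_norm \<alpha> f)"

definition compact_op :: "real \<Rightarrow> ((complex \<Rightarrow> complex) \<Rightarrow> (complex \<Rightarrow> complex)) \<Rightarrow> bool" where
  "compact_op \<alpha> K \<longleftrightarrow> op_on_bloch0 \<alpha> K \<and>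
     (\<forall>s::nat \<Rightarrow> complex \<Rightarrow> complex. (\<forall>n. s n \<in> bloch0 \<alpha>) \<and> (\<exists>M. \<forall>n. bloch_norm \<alpha> (s n) \<le> M) \<longrightarrow>
        (\<exists>r g. strict_mono r \<and> g \<in> bloch0 \<alpha> \<and>
           (\<lambda>n. bloch_norm \<alpha> (\<lambda>z. K (s (r n)) z - g z)) \<longlonglongrightarrow> 0))"

definition op_norm :: "real \<Rightarrow> ((complex \<Rightarrow> complex) \<Rightarrow> (complex \<Rightarrow> complex)) \<Rightarrow> real" where
  "op_norm \<alpha> T = Sup {bloch_norm \<alpha> (T f) | f. f \<in> bloch0 \<alpha> \<and> bloch_norm \<alpha> f \<le> 1}"

definition ess_norm :: "real \<Rightarrow> ((complex \<Rightarrow> complex) \<Rightarrow> (complex \<Rightarrow> complex)) \<Rightarrow> real" where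
  "ess_norm \<alpha> T = Inf {op_norm \<alpha> (\<lambda>f z. T f z + K f z) | K. compact_op \<alpha> K}"

end

theory Submission
  imports Defs
begin

text \<open>For f in B_alpha^0, integrating the bound on f' along radii against a suitable
majorant gives the growth estimate |f z| \<le> A \<parallel>f\<parallel> |z| (1 - |z|)^-gamma for every gamma > 0 with
gamma \<ge> alpha - 1. Since (C_beta f)' z = f z / (z (1 - z)^beta), the weighted derivative of C_beta f
is then O((1 - |z|)^delta) with delta = alpha - gamma - max beta 0, and the hypotheses on alpha
and beta are exactly what allows a choice of gamma with delta > 0. This decay makes C_beta
bounded, and also compact: by Montel's theorem a bounded sequence has a locally uniformly
convergent subsequence, and the Bloch norm of the difference of the images is small near the
boundary by the uniform decay and small on a compact subdisc by the Cauchy estimates. A compact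
operator T has essential norm 0, as witnessed by the compact perturbation -T.\<close>

lemma bloch_weight_le_bloch_norm:
  assumes "u \<in> bloch_space \<alpha>" "z \<in> ball 0 1"
  shows "(1 - (cmod z)^2) powr \<alpha> * cmod (deriv u z) \<le> bloch_norm \<alpha> u"
  using assms unfolding bloch_norm_def bloch_space_def by (intro cSUP_upper) auto

lemma bloch_norm_nonneg: "u \<in> bloch_space \<alpha> \<Longrightarrow> 0 \<le> bloch_norm \<alpha> u"
  using bloch_weight_le_bloch_norm[of u \<alpha> 0] norm_ge_zero[of "deriv u 0"] by (simp del: norm_ge_zero)

lemma bloch_norm_leI:
  "(\<And>z. z \<in> ball 0 1 \<Longrightarrow> (1 - (cmod z)^2) powr \<alpha> * cmod (deriv u z) \<le> B) \<Longrightarrow> bloch_norm \<alpha> u \<le> B"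
  unfolding bloch_norm_def by (rule cSUP_least) auto

lemma norm_deriv_le_bloch_norm:
  assumes "u \<in> bloch_space \<alpha>" "z \<in> ball 0 1"
  shows "cmod (deriv u z) \<le> bloch_norm \<alpha> u * (1 - (cmod z)^2) powr (-\<alpha>)"
proof -
  have "0 < 1 - (cmod z)^2"
    using assms(2) by (simp add: abs_square_less_1)
  then have "0 < (1 - (cmod z)^2) powr \<alpha>" by simp
  with bloch_weight_le_bloch_norm[OF assms] show ?thesis
    by (simp add: powr_minus field_simps)
qed

lemma bloch_space_lincomb:
  assumes u: "u \<in> bloch_space \<alpha>" and v: "v \<in> bloch_space \<alpha>"
  shows "(\<lambda>z. a * u z + b * v z) \<in> bloch_space \<alpha>"
    and "bloch_norm \<alpha> (\<lambda>z. a * u z + b * v z) \<le> cmod a * bloch_norm \<alpha> u + cmod b * bloch_norm \<alpha> v"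
proof -
  have hu: "u holomorphic_on ball 0 1" and hv: "v holomorphic_on ball 0 1"
    using u v by (auto simp: bloch_space_def)
  have bound: "(1 - (cmod z)^2) powr \<alpha> * cmod (deriv (\<lambda>z. a * u z + b * v z) z)
                 \<le> cmod a * bloch_norm \<alpha> u + cmod b * bloch_norm \<alpha> v" if z: "z \<in> ball 0 1" for z
  proof -
    define w where "w = (1 - (cmod z)^2) powr \<alpha>"
    have "deriv (\<lambda>z. a * u z + b * v z) z = a * deriv u z + b * deriv v z"
      by (intro DERIV_imp_deriv DERIV_add DERIV_cmult holomorphic_derivI[OF hu open_ball z]
            holomorphic_derivI[OF hv open_ball z])
    then have "w * cmod (deriv (\<lambda>z. a * u z + b * v z) z)
                 \<le> w * (cmod a * cmod (deriv u z) + cmod b * cmod (deriv v z))"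
      using norm_triangle_ineq[of "a * deriv u z" "b * deriv v z"]
      by (intro mult_left_mono) (auto simp: w_def norm_mult)
    also have "\<dots> = cmod a * (w * cmod (deriv u z)) + cmod b * (w * cmod (deriv v z))"
      by (simp add: algebra_simps)
    also have "\<dots> \<le> cmod a * bloch_norm \<alpha> u + cmod b * bloch_norm \<alpha> v"
      using bloch_weight_le_bloch_norm[OF u z] bloch_weight_le_bloch_norm[OF v z]
      unfolding w_def by (intro add_mono mult_left_mono) auto
    finally show ?thesis by (simp add: w_def)
  qed
  show "(\<lambda>z. a * u z + b * v z) \<in> bloch_space \<alpha>"
    using hu hv bound unfolding bloch_space_def by (auto intro!: holomorphic_intros bdd_aboveI2)
  show "bloch_norm \<alpha> (\<lambda>z. a * u z + b * v z) \<le> cmod a * bloch_norm \<alpha> u + cmod b * bloch_norm \<alpha> v"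
    by (rule bloch_norm_leI[OF bound])
qed

lemma bloch_space_add: "u \<in> bloch_space \<alpha> \<Longrightarrow> v \<in> bloch_space \<alpha> \<Longrightarrow> (\<lambda>z. u z + v z) \<in> bloch_space \<alpha>"
  and bloch_norm_add_le:
    "u \<in> bloch_space \<alpha> \<Longrightarrow> v \<in> bloch_space \<alpha> \<Longrightarrow> bloch_norm \<alpha> (\<lambda>z. u z + v z) \<le> bloch_norm \<alpha> u + bloch_norm \<alpha> v"
  using bloch_space_lincomb[of u \<alpha> v 1 1] by simp_all

lemma bloch_space_diff: "u \<in> bloch_space \<alpha> \<Longrightarrow> v \<in> bloch_space \<alpha> \<Longrightarrow> (\<lambda>z. u z - v z) \<in> bloch_space \<alpha>"
  using bloch_space_lincomb(1)[of u \<alpha> v 1 "-1"] by simp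

lemma bloch_norm_cmult_le:
  "u \<in> bloch_space \<alpha> \<Longrightarrow> bloch_norm \<alpha> (\<lambda>z. c * u z) \<le> cmod c * bloch_norm \<alpha> u"
  using bloch_space_lincomb(2)[of u \<alpha> u c 0] by simp

lemma bloch_norm_le_diff_add:
  assumes "u \<in> bloch_space \<alpha>" "g \<in> bloch_space \<alpha>"
  shows "bloch_norm \<alpha> u \<le> bloch_norm \<alpha> (\<lambda>z. u z - g z) + bloch_norm \<alpha> g"
  using bloch_norm_add_le[OF bloch_space_diff[OF assms] assms(2)] by simp

lemma bloch0_lincomb:
  "u \<in> bloch0 \<alpha> \<Longrightarrow> v \<in> bloch0 \<alpha> \<Longrightarrow> (\<lambda>z. a * u z + b * v z) \<in> bloch0 \<alpha>"
  using bloch_space_lincomb(1)[of u \<alpha> v a b] by (auto simp: bloch0_def)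

lemma bloch0_zero: "(\<lambda>z. 0) \<in> bloch0 \<alpha>" "bloch_norm \<alpha> (\<lambda>z. 0) = 0"
  by (auto simp: bloch0_def bloch_space_def bloch_norm_def)

lemma one_minus_norm_le_one_minus_norm_sq:
  "(z::complex) \<in> ball 0 1 \<Longrightarrow> 1 - cmod z \<le> 1 - (cmod z)^2"
  by (simp add: power2_eq_square mult_left_le_one_le)

lemma bloch_weight_le_one: "(z::complex) \<in> ball 0 1 \<Longrightarrow> 0 \<le> \<alpha> \<Longrightarrow> (1 - (cmod z)^2) powr \<alpha> \<le> 1"
  by (rule powr_le1) (auto simp: abs_le_iff abs_square_le_1)

lemma bloch_weight_le_one_minus_norm_powr:
  assumes z: "(z::complex) \<in> ball 0 1" and "0 \<le> \<alpha>"
  shows "(1 - (cmod z)^2) powr \<alpha> \<le> 2 powr \<alpha> * (1 - cmod z) powr \<alpha>"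
proof -
  have "1 - (cmod z)^2 = (1 - cmod z) * (1 + cmod z)"
    by (simp add: algebra_simps power2_eq_square)
  also have "\<dots> \<le> (1 - cmod z) * 2"
    using z by (intro mult_left_mono) auto
  finally have "(1 - (cmod z)^2) powr \<alpha> \<le> ((1 - cmod z) * 2) powr \<alpha>"
    using z assms(2) by (intro powr_mono2) (auto simp: abs_square_le_1 abs_le_iff)
  also have "\<dots> = (1 - cmod z) powr \<alpha> * 2 powr \<alpha>"
    by (rule powr_mult)
  also have "\<dots> = 2 powr \<alpha> * (1 - cmod z) powr \<alpha>"
    by (rule mult.commute)
  finally show ?thesis .
qed

section \<open>Radial growth of Bloch functions\<close>

lemma norm_le_radial_majorant:
  fixes f :: "complex \<Rightarrow> complex" and g g' :: "real \<Rightarrow> real"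
  assumes hol: "f holomorphic_on ball 0 1" and f0: "f 0 = 0" and z: "z \<in> ball 0 1"
    and g: "\<And>s. 0 \<le> s \<Longrightarrow> s \<le> cmod z \<Longrightarrow> (g has_real_derivative g' s) (at s)"
    and bound: "\<And>w. cmod w \<le> cmod z \<Longrightarrow> cmod (deriv f w) \<le> g' (cmod w)"
  shows "cmod (f z) \<le> g (cmod z) - g 0"
proof -
  define r where "r = cmod z"
  have radius: "cmod (of_real t * z) = t * r" "t * r \<le> r" "0 \<le> t * r" if "0 \<le> t" "t \<le> 1" for t
    using that by (auto simp: r_def norm_mult mult_left_le_one_le)
  have df: "((\<lambda>t. f (of_real t * z)) has_vector_derivative deriv f (of_real t * z) * z) (at t)"
    if "0 \<le> t" "t \<le> 1" for t
  proof (rule has_vector_derivative_real_field)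
    have "of_real t * z \<in> ball 0 1"
      using radius[OF that] z by (simp add: r_def)
    then have "(f has_field_derivative deriv f (of_real t * z)) (at (of_real t * z))"
      by (rule holomorphic_derivI[OF hol open_ball])
    moreover have "((\<lambda>x. x * z) has_field_derivative z) (at (of_real t))"
      by (rule derivative_eq_intros | simp)+
    ultimately show "((\<lambda>x. f (x * z)) has_field_derivative deriv f (of_real t * z) * z) (at (of_real t))"
      by (rule DERIV_chain2[where g = "\<lambda>x. x * z"])
  qed
  have dg: "((\<lambda>t. g (t * r)) has_vector_derivative g' (t * r) * r) (at t)"
    if "0 \<le> t" "t \<le> 1" for t
  proof -
    have "((\<lambda>t. t * r) has_real_derivative r) (at t)"
      by (rule derivative_eq_intros | simp)+
    with g[of "t * r"] radius[OF that] have "((\<lambda>t. g (t * r)) has_real_derivative g' (t * r) * r) (at t)"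
      by (intro DERIV_chain2[where g = "\<lambda>t. t * r"]) (auto simp: r_def)
    then show ?thesis by (simp add: has_real_derivative_iff_has_vector_derivative)
  qed
  have "cmod (f (of_real 1 * z) - f (of_real 0 * z)) \<le> g (1 * r) - g (0 * r)"
  proof (rule differentiable_bound_general[where f' = "\<lambda>t. deriv f (of_real t * z) * z"
                                            and \<phi>' = "\<lambda>t. g' (t * r) * r"])
    show "continuous_on {0..1} (\<lambda>t. f (of_real t * z))"
      by (rule continuous_on_vector_derivative, rule has_vector_derivative_at_within, rule df) auto
    show "continuous_on {0..1} (\<lambda>t. g (t * r))"
      by (rule continuous_on_vector_derivative, rule has_vector_derivative_at_within, rule dg) auto
    show "cmod (deriv f (of_real t * z) * z) \<le> g' (t * r) * r" if "0 < t" "t < 1" for t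
    proof -
      have "cmod (deriv f (of_real t * z)) \<le> g' (t * r)"
        using bound[of "of_real t * z"] radius[of t] that by (simp add: r_def)
      then show ?thesis by (simp add: norm_mult r_def mult_right_mono)
    qed
    show "((\<lambda>t. f (of_real t * z)) has_vector_derivative deriv f (of_real t * z) * z) (at t)"
      "((\<lambda>t. g (t * r)) has_vector_derivative g' (t * r) * r) (at t)" if "0 < t" "t < 1" for t
      using df[of t] dg[of t] that by simp_all
  qed simp
  then show ?thesis by (simp add: f0 r_def)
qed

definition growth_bound :: "real \<Rightarrow> real \<Rightarrow> (complex \<Rightarrow> complex) \<Rightarrow> bool" where
  "growth_bound \<gamma> K h \<longleftrightarrow> (\<forall>w\<in>ball 0 1. cmod (h w) \<le> K * cmod w * (1 - cmod w) powr (-\<gamma>))"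

lemma growth_majorant_factor:
  fixes \<gamma> s :: real
  assumes "0 < \<gamma>" "0 \<le> s" "s \<le> 1"
  shows "1 \<le> max 1 (1 / \<gamma>) * (1 - s + \<gamma> * s)"
proof (cases "\<gamma> \<le> 1")
  case True
  have "\<gamma> \<le> 1 - s + \<gamma> * s"
    using assms True mult_left_mono[of \<gamma> 1 "1 - s"] by (simp add: algebra_simps)
  then have "1 \<le> 1 / \<gamma> * (1 - s + \<gamma> * s)"
    using assms by (simp add: field_simps)
  also have "\<dots> \<le> max 1 (1 / \<gamma>) * (1 - s + \<gamma> * s)"
    using \<open>\<gamma> \<le> 1 - s + \<gamma> * s\<close> assms by (intro mult_right_mono) auto
  finally show ?thesis .
next
  case False
  then have "1 \<le> 1 - s + \<gamma> * s"
    using assms mult_right_mono[of 1 \<gamma> s] by simp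
  then show ?thesis
    using mult_mono[of 1 "max 1 (1 / \<gamma>)" 1 "1 - s + \<gamma> * s"] by simp
qed

lemma has_real_derivative_growth_majorant:
  assumes "s < 1"
  shows "((\<lambda>s. s * (1 - s) powr (-\<gamma>)) has_real_derivative
           (1 - s) powr (-\<gamma> - 1) * (1 - s + \<gamma> * s)) (at s)"
proof -
  have "((\<lambda>s. 1 - s) has_real_derivative -1) (at s)"
    by (rule derivative_eq_intros | simp)+
  then have "((\<lambda>s. (1 - s) powr (-\<gamma>)) has_real_derivative (-\<gamma>) * (1 - s) powr (-\<gamma> - of_nat 1) * -1) (at s)"
    by (rule DERIV_fun_powr) (use assms in simp)
  then have "((\<lambda>s. s * (1 - s) powr (-\<gamma>)) has_real_derivative
               1 * (1 - s) powr (-\<gamma>) + (-\<gamma>) * (1 - s) powr (-\<gamma> - of_nat 1) * -1 * s) (at s)"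
    by (rule DERIV_mult[OF DERIV_ident])
  moreover have "(1 - s) powr (-\<gamma>) = (1 - s) powr (-\<gamma> - 1) * (1 - s)"
    using assms powr_add[of "1 - s" "-\<gamma> - 1" 1] by simp
  ultimately show ?thesis
    by (simp add: algebra_simps)
qed

lemma bloch0_growth_bound:
  assumes f: "f \<in> bloch0 \<alpha>" and "0 \<le> \<alpha>" "0 < \<gamma>" "\<alpha> \<le> \<gamma> + 1"
  shows "growth_bound \<gamma> (max 1 (1 / \<gamma>) * bloch_norm \<alpha> f) f"
  unfolding growth_bound_def
proof
  fix z :: complex assume z: "z \<in> ball 0 1"
  define N where "N = bloch_norm \<alpha> f"
  define A where "A = max 1 (1 / \<gamma>) * N"
  have fb: "f \<in> bloch_space \<alpha>" and hol: "f holomorphic_on ball 0 1" and f0: "f 0 = 0"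
    using f by (auto simp: bloch0_def bloch_space_def)
  have N: "0 \<le> N"
    using bloch_norm_nonneg[OF fb] by (simp add: N_def)
  have "cmod (f z) \<le> A * (cmod z * (1 - cmod z) powr (-\<gamma>)) - A * (0 * (1 - 0) powr (-\<gamma>))"
  proof (rule norm_le_radial_majorant[OF hol f0 z, where g = "\<lambda>s. A * (s * (1 - s) powr (-\<gamma>))"
                                          and g' = "\<lambda>s. A * ((1 - s) powr (-\<gamma> - 1) * (1 - s + \<gamma> * s))"])
    show "((\<lambda>s. A * (s * (1 - s) powr (-\<gamma>))) has_real_derivative
            A * ((1 - s) powr (-\<gamma> - 1) * (1 - s + \<gamma> * s))) (at s)" if "s \<le> cmod z" for s
      using that z by (intro DERIV_cmult has_real_derivative_growth_majorant) simp
  next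
    fix w :: complex assume w: "cmod w \<le> cmod z"
    then have wb: "w \<in> ball 0 1" using z by simp
    then have pos: "0 < 1 - cmod w" by simp
    have "(1 - (cmod w)^2) powr (-\<alpha>) \<le> (1 - cmod w) powr (-\<alpha>)"
      by (rule powr_mono2') (use one_minus_norm_le_one_minus_norm_sq[OF wb] pos assms(2) in auto)
    also have "\<dots> \<le> (1 - cmod w) powr (-\<gamma> - 1)"
      by (rule powr_mono') (use pos assms(4) in auto)
    finally have "cmod (deriv f w) \<le> N * (1 - cmod w) powr (-\<gamma> - 1)"
      using norm_deriv_le_bloch_norm[OF fb wb] N
      by (metis N_def mult_left_mono order_trans)
    also have "\<dots> \<le> N * (1 - cmod w) powr (-\<gamma> - 1) * (max 1 (1 / \<gamma>) * (1 - cmod w + \<gamma> * cmod w))"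
      using growth_majorant_factor[of \<gamma> "cmod w"] wb assms(3) N
        mult_left_mono[of 1 "max 1 (1 / \<gamma>) * (1 - cmod w + \<gamma> * cmod w)" "N * (1 - cmod w) powr (-\<gamma> - 1)"]
      by simp
    also have "\<dots> = A * ((1 - cmod w) powr (-\<gamma> - 1) * (1 - cmod w + \<gamma> * cmod w))"
      by (simp add: A_def mult_ac)
    finally show "cmod (deriv f w) \<le> A * ((1 - cmod w) powr (-\<gamma> - 1) * (1 - cmod w + \<gamma> * cmod w))" .
  qed
  then show "cmod (f z) \<le> max 1 (1 / \<gamma>) * bloch_norm \<alpha> f * cmod z * (1 - cmod z) powr (-\<gamma>)"
    by (simp add: A_def N_def mult.assoc)
qed

lemma growth_bound_mono:
  assumes "growth_bound \<gamma> K h" "K \<le> L"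
  shows "growth_bound \<gamma> L h"
  unfolding growth_bound_def
proof
  fix w :: complex assume "w \<in> ball 0 1"
  then have "cmod (h w) \<le> K * cmod w * (1 - cmod w) powr (-\<gamma>)"
    using assms(1) by (auto simp: growth_bound_def)
  also have "\<dots> \<le> L * cmod w * (1 - cmod w) powr (-\<gamma>)"
    using assms(2) by (intro mult_right_mono) auto
  finally show "cmod (h w) \<le> L * cmod w * (1 - cmod w) powr (-\<gamma>)" .
qed

lemma growth_bound_diff:
  "growth_bound \<gamma> K u \<Longrightarrow> growth_bound \<gamma> L v \<Longrightarrow> growth_bound \<gamma> (K + L) (\<lambda>z. u z - v z)"
  unfolding growth_bound_def
  by (auto simp: distrib_right intro: order_trans[OF norm_triangle_ineq4] add_mono)

lemma growth_bound_limit: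
  assumes "\<And>n. growth_bound \<gamma> K (F n)" and "\<And>z. z \<in> ball 0 1 \<Longrightarrow> (\<lambda>n. F n z) \<longlonglongrightarrow> f z"
  shows "growth_bound \<gamma> K f"
  unfolding growth_bound_def
proof
  fix z :: complex assume z: "z \<in> ball 0 1"
  have "(\<lambda>n. cmod (F n z)) \<longlonglongrightarrow> cmod (f z)"
    by (intro tendsto_norm assms(2) z)
  moreover have "\<forall>\<^sub>F n in sequentially. cmod (F n z) \<le> K * cmod z * (1 - cmod z) powr (-\<gamma>)"
    using assms(1) z by (auto simp: growth_bound_def)
  ultimately show "cmod (f z) \<le> K * cmod z * (1 - cmod z) powr (-\<gamma>)"
    by (intro tendsto_upperbound) auto
qed

lemma growth_bound_locally_bounded:
  assumes "compact S" "S \<subseteq> ball 0 1" "0 \<le> \<gamma>" "0 \<le> K"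
  obtains B where "\<And>h z. growth_bound \<gamma> K h \<Longrightarrow> z \<in> S \<Longrightarrow> cmod (h z) \<le> B"
proof (cases "S = {}")
  case False
  obtain x where x: "x \<in> S" "\<And>y. y \<in> S \<Longrightarrow> cmod y \<le> cmod x"
    using compact_attains_sup[OF compact_continuous_image[OF continuous_on_norm_id assms(1)]] False
    by auto
  have "cmod (h z) \<le> K * 1 * (1 - cmod x) powr (-\<gamma>)" if "growth_bound \<gamma> K h" "z \<in> S" for h z
  proof -
    have "cmod (h z) \<le> K * cmod z * (1 - cmod z) powr (-\<gamma>)"
      using that assms(2) by (auto simp: growth_bound_def)
    also have "\<dots> \<le> K * 1 * (1 - cmod x) powr (-\<gamma>)"
      using x that assms by (intro mult_mono powr_mono2') auto
    finally show ?thesis .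
  qed
  then show ?thesis by (rule that)
qed (use that in blast)

lemma growth_bound_Montel:
  fixes F :: "nat \<Rightarrow> complex \<Rightarrow> complex"
  assumes hol: "\<And>n. F n holomorphic_on ball 0 1" and F0: "\<And>n. F n 0 = 0"
    and growth: "\<And>n. growth_bound \<gamma> K (F n)" and "0 \<le> \<gamma>" "0 \<le> K"
  obtains f r where "strict_mono r" "f holomorphic_on ball 0 1" "f 0 = 0" "growth_bound \<gamma> K f"
    "\<And>S. compact S \<Longrightarrow> S \<subseteq> ball 0 1 \<Longrightarrow> uniform_limit S (F \<circ> r) f sequentially"
proof -
  have locally_bounded: "\<exists>B. \<forall>h\<in>range F. \<forall>z\<in>S. cmod (h z) \<le> B" if S: "compact S" "S \<subseteq> ball 0 1" for S
  proof -
    obtain B where "\<And>h z. growth_bound \<gamma> K h \<Longrightarrow> z \<in> S \<Longrightarrow> cmod (h z) \<le> B"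
      using growth_bound_locally_bounded[OF S assms(4,5)] by blast
    then show ?thesis
      using growth by blast
  qed
  have range_hol: "h holomorphic_on ball 0 1" if "h \<in> range F" for h
    using hol that by blast
  obtain f r where f: "f holomorphic_on ball 0 1" and r: "strict_mono r"
    and lim: "\<And>z. z \<in> ball 0 1 \<Longrightarrow> (\<lambda>n. F (r n) z) \<longlonglongrightarrow> f z"
    and unif: "\<And>S. compact S \<Longrightarrow> S \<subseteq> ball 0 1 \<Longrightarrow> uniform_limit S (F \<circ> r) f sequentially"
    using Montel[OF open_ball range_hol locally_bounded subset_refl] by blast
  have "f 0 = 0"
    using LIMSEQ_unique[OF lim[of 0]] F0 by simp
  moreover have "growth_bound \<gamma> K f"
    using growth lim by (rule growth_bound_limit)
  ultimately show ?thesis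
    using that r f unif by blast
qed

section \<open>The Cesaro operator and its derivative\<close>

lemma one_minus_notin_nonpos_Reals:
  assumes "(w::complex) \<in> ball 0 1"
  shows "1 - w \<notin> \<real>\<^sub>\<le>\<^sub>0"
proof
  assume "1 - w \<in> \<real>\<^sub>\<le>\<^sub>0"
  then have "Re w \<ge> 1" by (simp add: complex_nonpos_Reals_iff)
  with assms abs_Re_le_cmod[of w] show False by auto
qed

definition cesaro_integrand :: "real \<Rightarrow> (complex \<Rightarrow> complex) \<Rightarrow> complex \<Rightarrow> complex" where
  "cesaro_integrand \<beta> f w = (if w = 0 then deriv f 0 else f w / w) / (1 - w) powr (complex_of_real \<beta>)"

lemma holomorphic_cesaro_integrand:
  assumes "f holomorphic_on ball 0 1" and "f 0 = 0"
  shows "cesaro_integrand \<beta> f holomorphic_on ball 0 1"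
proof -
  have "(\<lambda>z. if z = 0 then deriv f 0 else (f z - f 0) / (z - 0)) holomorphic_on ball 0 1"
    by (rule pole_lemma_open[OF assms(1) open_ball])
  also have "(\<lambda>z. if z = 0 then deriv f 0 else (f z - f 0) / (z - 0)) = (\<lambda>z. if z = 0 then deriv f 0 else f z / z)"
    using assms(2) by auto
  finally have "(\<lambda>z. if z = 0 then deriv f 0 else f z / z) holomorphic_on ball 0 1" .
  moreover have "(\<lambda>w. (1 - w) powr (complex_of_real \<beta>)) holomorphic_on ball 0 1"
    by (intro holomorphic_on_powr holomorphic_intros) (use one_minus_notin_nonpos_Reals in auto)
  ultimately show ?thesis
    unfolding cesaro_integrand_def[abs_def]
    by (intro holomorphic_on_divide) (use one_minus_notin_nonpos_Reals in \<open>auto simp: powr_def\<close>)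
qed

lemma cesaro_eq_integral_integrand:
  "cesaro \<beta> f z = contour_integral (linepath 0 z) (cesaro_integrand \<beta> f)"
proof (cases "z = 0")
  case False
  show ?thesis unfolding cesaro_def
    by (rule contour_integral_spike_finite_simple_path[of "{0}"])
       (use False in \<open>auto simp: cesaro_integrand_def\<close>)
qed (simp add: cesaro_def)

lemma segment_subset_unit_ball: "(z::complex) \<in> ball 0 1 \<Longrightarrow> closed_segment 0 z \<subseteq> ball 0 1"
  by (simp add: closed_segment_subset)

lemma has_field_derivative_cesaro:
  assumes hol: "f holomorphic_on ball 0 1" and f0: "f 0 = 0" and z: "z \<in> ball 0 1"
  shows "(cesaro \<beta> f has_field_derivative cesaro_integrand \<beta> f z) (at z)"
proof -
  have "((\<lambda>x. contour_integral (linepath 0 x) (cesaro_integrand \<beta> f))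
          has_field_derivative cesaro_integrand \<beta> f z) (at z within ball 0 1)"
  proof (rule triangle_contour_integrals_convex_primitive)
    show "continuous_on (ball 0 1) (cesaro_integrand \<beta> f)"
      by (rule holomorphic_on_imp_continuous_on[OF holomorphic_cesaro_integrand[OF hol f0]])
    fix b c :: complex
    assume "b \<in> ball 0 1" "c \<in> ball 0 1"
    then have "convex hull {0, b, c} \<subseteq> ball 0 1"
      by (intro hull_minimal) auto
    moreover have "convex hull {0, b} \<union> convex hull {b, c} \<union> convex hull {c, 0} \<subseteq> convex hull {0, b, c}"
      by (intro Un_least hull_mono) auto
    ultimately have "path_image (linepath 0 b +++ linepath b c +++ linepath c 0) \<subseteq> ball 0 1"
      using path_image_join_subset[of "linepath 0 b" "linepath b c +++ linepath c 0"]
        path_image_join_subset[of "linepath b c" "linepath c 0"]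
      unfolding path_image_linepath segment_convex_hull by blast
    then have "(cesaro_integrand \<beta> f has_contour_integral 0) (linepath 0 b +++ linepath b c +++ linepath c 0)"
      by (intro Cauchy_theorem_convex_simple[OF holomorphic_cesaro_integrand[OF hol f0]])
         (simp_all add: valid_path_join)
    then show "contour_integral (linepath 0 b) (cesaro_integrand \<beta> f) +
               contour_integral (linepath b c) (cesaro_integrand \<beta> f) +
               contour_integral (linepath c 0) (cesaro_integrand \<beta> f) = 0"
      by (rule has_chain_integral_chain_integral3)
  qed (use z in simp_all)
  moreover have "cesaro \<beta> f = (\<lambda>x. contour_integral (linepath 0 x) (cesaro_integrand \<beta> f))"
    by (intro ext cesaro_eq_integral_integrand)
  ultimately show ?thesis
    by (metis at_within_open[OF z open_ball])
qed

lemma deriv_cesaro: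
  "f holomorphic_on ball 0 1 \<Longrightarrow> f 0 = 0 \<Longrightarrow> z \<in> ball 0 1 \<Longrightarrow> deriv (cesaro \<beta> f) z = cesaro_integrand \<beta> f z"
  by (rule DERIV_imp_deriv[OF has_field_derivative_cesaro])

lemma cesaro_integrand_diff:
  assumes "f holomorphic_on ball 0 1" "g holomorphic_on ball 0 1"
  shows "cesaro_integrand \<beta> f z - cesaro_integrand \<beta> g z = cesaro_integrand \<beta> (\<lambda>w. f w - g w) z"
proof -
  have "deriv (\<lambda>w. f w - g w) 0 = deriv f 0 - deriv g 0"
    by (intro DERIV_imp_deriv DERIV_diff holomorphic_derivI[OF assms(1) open_ball]
          holomorphic_derivI[OF assms(2) open_ball]) auto
  then show ?thesis by (simp add: cesaro_integrand_def diff_divide_distrib)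
qed

lemma cesaro_cong:
  assumes "\<forall>w\<in>ball 0 1. f w = g w" "z \<in> ball 0 1"
  shows "cesaro \<beta> f z = cesaro \<beta> g z"
  unfolding cesaro_def
  by (rule contour_integral_eq) (use assms segment_subset_unit_ball[OF assms(2)] in auto)

lemma cesaro_integrand_contour_integrable:
  assumes "f holomorphic_on ball 0 1" "f 0 = 0" "z \<in> ball 0 1"
  shows "cesaro_integrand \<beta> f contour_integrable_on linepath 0 z"
  using holomorphic_on_imp_continuous_on[OF holomorphic_cesaro_integrand[OF assms(1,2)]]
    segment_subset_unit_ball[OF assms(3)]
  by (intro contour_integrable_continuous_linepath) (rule continuous_on_subset)

lemma cesaro_lincomb:
  assumes f: "f holomorphic_on ball 0 1" "f 0 = 0" and g: "g holomorphic_on ball 0 1" "g 0 = 0"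
    and z: "z \<in> ball 0 1"
  shows "cesaro \<beta> (\<lambda>w. a * f w + b * g w) z = a * cesaro \<beta> f z + b * cesaro \<beta> g z"
proof (cases "z = 0")
  case False
  have "contour_integral (linepath 0 z) (cesaro_integrand \<beta> (\<lambda>w. a * f w + b * g w))
          = contour_integral (linepath 0 z) (\<lambda>w. a * cesaro_integrand \<beta> f w + b * cesaro_integrand \<beta> g w)"
    by (rule contour_integral_spike_finite_simple_path[of "{0}"])
       (use False in \<open>auto simp: cesaro_integrand_def add_divide_distrib\<close>)
  also have "\<dots> = a * contour_integral (linepath 0 z) (cesaro_integrand \<beta> f)
                  + b * contour_integral (linepath 0 z) (cesaro_integrand \<beta> g)"
    using cesaro_integrand_contour_integrable[OF f z] cesaro_integrand_contour_integrable[OF g z]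
    by (simp add: contour_integral_add contour_integrable_lmul contour_integral_lmul)
  finally show ?thesis
    by (simp add: cesaro_eq_integral_integrand)
qed (simp add: cesaro_def)

lemma cesaro_in_bloch0:
  assumes hol: "f holomorphic_on ball 0 1" and f0: "f 0 = 0"
    and B: "\<And>z. z \<in> ball 0 1 \<Longrightarrow> (1 - (cmod z)^2) powr \<alpha> * cmod (cesaro_integrand \<beta> f z) \<le> B"
  shows "cesaro \<beta> f \<in> bloch0 \<alpha>" and "bloch_norm \<alpha> (cesaro \<beta> f) \<le> B"
proof -
  have "cesaro \<beta> f holomorphic_on ball 0 1"
    unfolding holomorphic_on_open[OF open_ball] using has_field_derivative_cesaro[OF hol f0] by blast
  moreover have "bdd_above ((\<lambda>z. (1 - (cmod z)^2) powr \<alpha> * cmod (deriv (cesaro \<beta> f) z)) ` ball 0 1)"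
    using B deriv_cesaro[OF hol f0] by (auto intro!: bdd_aboveI2[where M = B])
  ultimately show "cesaro \<beta> f \<in> bloch0 \<alpha>"
    by (simp add: bloch0_def bloch_space_def cesaro_def)
  show "bloch_norm \<alpha> (cesaro \<beta> f) \<le> B"
    using B deriv_cesaro[OF hol f0] by (intro bloch_norm_leI) auto
qed

lemma bloch_norm_cesaro_diff_le:
  assumes u: "u holomorphic_on ball 0 1" "u 0 = 0" and v: "v holomorphic_on ball 0 1" "v 0 = 0"
    and B: "\<And>z. z \<in> ball 0 1 \<Longrightarrow>
              (1 - (cmod z)^2) powr \<alpha> * cmod (cesaro_integrand \<beta> (\<lambda>w. u w - v w) z) \<le> B"
  shows "bloch_norm \<alpha> (\<lambda>z. cesaro \<beta> u z - cesaro \<beta> v z) \<le> B"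
proof (rule bloch_norm_leI)
  fix z :: complex assume z: "z \<in> ball 0 1"
  have "deriv (\<lambda>z. cesaro \<beta> u z - cesaro \<beta> v z) z = cesaro_integrand \<beta> u z - cesaro_integrand \<beta> v z"
    by (intro DERIV_imp_deriv DERIV_diff has_field_derivative_cesaro u v z)
  with B[OF z] show "(1 - (cmod z)^2) powr \<alpha> * cmod (deriv (\<lambda>z. cesaro \<beta> u z - cesaro \<beta> v z) z) \<le> B"
    by (simp add: cesaro_integrand_diff[OF u(1) v(1)])
qed

lemma norm_cesaro_integrand:
  assumes "z \<in> ball 0 1"
  shows "cmod (cesaro_integrand \<beta> f z) = cmod (if z = 0 then deriv f 0 else f z / z) * cmod (1 - z) powr (-\<beta>)"
  using assms unfolding cesaro_integrand_def norm_divide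
  by (simp add: norm_powr_real_powr' powr_minus divide_inverse)

lemma norm_one_minus_powr_le:
  assumes z: "(z::complex) \<in> ball 0 1"
  shows "cmod (1 - z) powr (-\<beta>) \<le> 2 powr \<bar>\<beta>\<bar> * (1 - cmod z) powr (- max \<beta> 0)"
proof -
  have lower: "1 - cmod z \<le> cmod (1 - z)" and upper: "cmod (1 - z) \<le> 2"
    using norm_triangle_ineq2[of 1 z] norm_triangle_ineq4[of 1 z] z by auto
  show ?thesis
  proof (cases "\<beta> \<ge> 0")
    case True
    have "cmod (1 - z) powr (-\<beta>) \<le> (1 - cmod z) powr (-\<beta>)"
      by (rule powr_mono2') (use True lower z in auto)
    moreover have "1 \<le> (2::real) powr \<bar>\<beta>\<bar>" by (rule ge_one_powr_ge_zero) auto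
    ultimately show ?thesis
      using True mult_right_mono[of 1 "2 powr \<bar>\<beta>\<bar>" "(1 - cmod z) powr (-\<beta>)"] by simp
  next
    case False
    have "cmod (1 - z) powr (-\<beta>) \<le> 2 powr (-\<beta>)"
      by (rule powr_mono2) (use False upper in auto)
    then show ?thesis using False z by simp
  qed
qed

lemma cesaro_integrand_weighted_le:
  assumes h: "growth_bound \<gamma> K h" and z: "z \<in> ball 0 1" "z \<noteq> 0" and "0 \<le> \<alpha>" "0 \<le> K"
  shows "(1 - (cmod z)^2) powr \<alpha> * cmod (cesaro_integrand \<beta> h z)
           \<le> 2 powr \<alpha> * 2 powr \<bar>\<beta>\<bar> * K * (1 - cmod z) powr (\<alpha> - \<gamma> - max \<beta> 0)"
proof -
  define s where "s = 1 - cmod z"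
  have s: "0 < s" using z by (simp add: s_def)
  have "cmod (h z / z) \<le> K * s powr (-\<gamma>)"
    using h z by (simp add: growth_bound_def norm_divide field_simps s_def)
  then have "cmod (cesaro_integrand \<beta> h z) \<le> (K * s powr (-\<gamma>)) * (2 powr \<bar>\<beta>\<bar> * s powr (- max \<beta> 0))"
    unfolding norm_cesaro_integrand[OF z(1)] using z norm_one_minus_powr_le[OF z(1), of \<beta>] assms(5)
    by (intro mult_mono) (auto simp: s_def)
  then have "(1 - (cmod z)^2) powr \<alpha> * cmod (cesaro_integrand \<beta> h z)
               \<le> (2 powr \<alpha> * s powr \<alpha>) * ((K * s powr (-\<gamma>)) * (2 powr \<bar>\<beta>\<bar> * s powr (- max \<beta> 0)))"
    using bloch_weight_le_one_minus_norm_powr[OF z(1) assms(4)] assms(5) by (intro mult_mono) (auto simp: s_def)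
  also have "\<dots> = 2 powr \<alpha> * 2 powr \<bar>\<beta>\<bar> * K * (s powr \<alpha> * s powr (-\<gamma>) * s powr (- max \<beta> 0))"
    by (simp add: mult_ac)
  also have "s powr \<alpha> * s powr (-\<gamma>) * s powr (- max \<beta> 0) = s powr (\<alpha> - \<gamma> - max \<beta> 0)"
    using s by (simp add: powr_add[symmetric])
  finally show ?thesis by (simp add: s_def)
qed

lemma norm_deriv_le_Cauchy:
  assumes "h holomorphic_on S" "cball w d \<subseteq> S" "open S" "0 < d"
    and "\<And>x. x \<in> cball w d \<Longrightarrow> cmod (h x) \<le> \<theta>"
  shows "cmod (deriv h w) \<le> \<theta> / d"
proof -
  have "cmod ((deriv ^^ 1) h w) \<le> fact 1 * \<theta> / d ^ 1"
  proof (rule Cauchy_inequality)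
    show "h holomorphic_on ball w d"
      using assms(1,2) ball_subset_cball by (blast intro: holomorphic_on_subset)
    show "continuous_on (cball w d) h"
      using assms(1-3) by (blast intro: continuous_on_subset holomorphic_on_imp_continuous_on)
  qed (use assms(4,5) in \<open>auto simp: dist_norm\<close>)
  then show ?thesis by simp
qed

lemma norm_cesaro_integrand_le_interior:
  assumes hol: "h holomorphic_on ball 0 1" and h0: "h 0 = 0" and d: "0 < d" "\<rho> + d < 1"
    and \<theta>: "\<And>w. cmod w \<le> \<rho> + d \<Longrightarrow> cmod (h w) \<le> \<theta>" and z: "cmod z \<le> \<rho>"
  shows "cmod (cesaro_integrand \<beta> h z) \<le> \<theta> / d * (2 powr \<bar>\<beta>\<bar> * (1 - \<rho>) powr (- max \<beta> 0))"
proof -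
  have zb: "z \<in> ball 0 1" using z d by simp
  have dh: "cmod (deriv h w) \<le> \<theta> / d" if "cmod w \<le> \<rho>" for w
  proof (rule norm_deriv_le_Cauchy[OF hol _ open_ball d(1)])
    have "cmod x \<le> \<rho> + d" if "x \<in> cball w d" for x
      using that \<open>cmod w \<le> \<rho>\<close> norm_triangle_ineq2[of x w] by (simp add: dist_norm norm_minus_commute)
    then show "cball w d \<subseteq> ball 0 1" "\<And>x. x \<in> cball w d \<Longrightarrow> cmod (h x) \<le> \<theta>"
      using d \<theta> by fastforce+
  qed
  have "cmod (h z) \<le> \<theta> / d * cmod z - \<theta> / d * 0"
  proof (rule norm_le_radial_majorant[OF hol h0 zb, where g = "\<lambda>s. \<theta> / d * s" and g' = "\<lambda>_. \<theta> / d"])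
    show "((\<lambda>s. \<theta> / d * s) has_real_derivative \<theta> / d) (at s)" for s
      by (rule derivative_eq_intros | simp)+
  qed (use dh z in auto)
  then have "cmod (if z = 0 then deriv h 0 else h z / z) \<le> \<theta> / d"
    using dh[of 0] z d by (auto simp: norm_divide field_simps)
  moreover have "(1 - cmod z) powr (- max \<beta> 0) \<le> (1 - \<rho>) powr (- max \<beta> 0)"
    by (rule powr_mono2') (use z d in auto)
  then have "cmod (1 - z) powr (-\<beta>) \<le> 2 powr \<bar>\<beta>\<bar> * (1 - \<rho>) powr (- max \<beta> 0)"
    using norm_one_minus_powr_le[OF zb, of \<beta>] by (meson mult_left_mono order_trans powr_ge_zero)
  moreover have "0 \<le> \<theta>"
    using \<theta>[of 0] h0 order_trans[OF norm_ge_zero z] d by simp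
  ultimately show ?thesis
    unfolding norm_cesaro_integrand[OF zb] using d by (intro mult_mono) auto
qed

lemma exists_small_powr_le:
  fixes c \<epsilon> \<delta> :: real
  assumes "0 \<le> c" "0 < \<epsilon>" "0 < \<delta>"
  obtains \<eta> where "0 < \<eta>" "\<eta> < 1" "c * \<eta> powr \<delta> \<le> \<epsilon>"
proof
  define q where "q = \<epsilon> / (c + 1)"
  have q: "0 < q" "c * q \<le> \<epsilon>"
    using assms by (auto simp: q_def field_simps)
  show "0 < min (1/2) (q powr (1/\<delta>))" "min (1/2) (q powr (1/\<delta>)) < 1"
    using q by auto
  have "min (1/2) (q powr (1/\<delta>)) powr \<delta> \<le> (q powr (1/\<delta>)) powr \<delta>"
    using q assms by (intro powr_mono2) auto
  also have "\<dots> = q"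
    using q assms by (simp add: powr_powr)
  finally show "c * min (1/2) (q powr (1/\<delta>)) powr \<delta> \<le> \<epsilon>"
    using q assms by (meson mult_left_mono order_trans)
qed

section \<open>Boundedness and compactness\<close>

context
  fixes \<alpha> \<beta> \<gamma> :: real
  assumes alpha_pos: "0 < \<alpha>" and gamma_pos: "0 < \<gamma>" and growth_exponent: "\<alpha> \<le> \<gamma> + 1"
    and decay_exponent: "\<gamma> + max \<beta> 0 < \<alpha>"
begin

lemma cesaro_integrand_weighted_le_bloch_norm:
  assumes f: "f \<in> bloch0 \<alpha>" and z: "z \<in> ball 0 1"
  shows "(1 - (cmod z)^2) powr \<alpha> * cmod (cesaro_integrand \<beta> f z)
           \<le> 2 powr \<alpha> * 2 powr \<bar>\<beta>\<bar> * max 1 (1 / \<gamma>) * bloch_norm \<alpha> f"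
proof -
  have fb: "f \<in> bloch_space \<alpha>" using f by (simp add: bloch0_def)
  have N: "0 \<le> bloch_norm \<alpha> f" by (rule bloch_norm_nonneg[OF fb])
  have C: "1 \<le> 2 powr \<alpha> * 2 powr \<bar>\<beta>\<bar> * max 1 (1 / \<gamma>)"
    using alpha_pos by (intro mult_ge1_I ge_one_powr_ge_zero) auto
  show ?thesis
  proof (cases "z = 0")
    case True
    then have "(1 - (cmod z)^2) powr \<alpha> * cmod (cesaro_integrand \<beta> f z) \<le> bloch_norm \<alpha> f"
      using bloch_weight_le_bloch_norm[OF fb z] by (simp add: cesaro_integrand_def)
    also have "\<dots> \<le> 2 powr \<alpha> * 2 powr \<bar>\<beta>\<bar> * max 1 (1 / \<gamma>) * bloch_norm \<alpha> f"
      using C N mult_right_mono[OF C N] by simp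
    finally show ?thesis .
  next
    case False
    have "(1 - (cmod z)^2) powr \<alpha> * cmod (cesaro_integrand \<beta> f z)
            \<le> 2 powr \<alpha> * 2 powr \<bar>\<beta>\<bar> * (max 1 (1 / \<gamma>) * bloch_norm \<alpha> f) * (1 - cmod z) powr (\<alpha> - \<gamma> - max \<beta> 0)"
      using bloch0_growth_bound[OF f _ gamma_pos growth_exponent] alpha_pos N z False
      by (intro cesaro_integrand_weighted_le) auto
    also have "\<dots> \<le> 2 powr \<alpha> * 2 powr \<bar>\<beta>\<bar> * (max 1 (1 / \<gamma>) * bloch_norm \<alpha> f) * 1"
      using z decay_exponent N by (intro mult_left_mono powr_le1) auto
    finally show ?thesis by (simp add: mult.assoc)
  qed
qed

lemma bounded_op_cesaro: "bounded_op \<alpha> (cesaro \<beta>)"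
proof -
  have bound: "cesaro \<beta> f \<in> bloch0 \<alpha>"
    "bloch_norm \<alpha> (cesaro \<beta> f) \<le> 2 powr \<alpha> * 2 powr \<bar>\<beta>\<bar> * max 1 (1 / \<gamma>) * bloch_norm \<alpha> f"
    if "f \<in> bloch0 \<alpha>" for f
    using that cesaro_integrand_weighted_le_bloch_norm[OF that]
    by (intro cesaro_in_bloch0; force simp: bloch0_def bloch_space_def)+
  have "op_on_bloch0 \<alpha> (cesaro \<beta>)"
    unfolding op_on_bloch0_def
    using bound(1) cesaro_cong cesaro_lincomb by (auto simp: bloch0_def bloch_space_def)
  then show ?thesis
    unfolding bounded_op_def using bound(2) by blast
qed

lemma cesaro_in_bloch0_of_growth_bound:
  assumes hol: "h holomorphic_on ball 0 1" and h0: "h 0 = 0" and growth: "growth_bound \<gamma> K h"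
    and K: "0 \<le> K"
  shows "cesaro \<beta> h \<in> bloch0 \<alpha>"
proof (rule cesaro_in_bloch0[OF hol h0])
  fix z :: complex assume z: "z \<in> ball 0 1"
  show "(1 - (cmod z)^2) powr \<alpha> * cmod (cesaro_integrand \<beta> h z)
          \<le> max (2 powr \<alpha> * 2 powr \<bar>\<beta>\<bar> * K) (cmod (deriv h 0))"
  proof (cases "z = 0")
    case False
    have "(1 - (cmod z)^2) powr \<alpha> * cmod (cesaro_integrand \<beta> h z)
            \<le> 2 powr \<alpha> * 2 powr \<bar>\<beta>\<bar> * K * (1 - cmod z) powr (\<alpha> - \<gamma> - max \<beta> 0)"
      using alpha_pos K by (intro cesaro_integrand_weighted_le[OF growth z False]) auto
    also have "\<dots> \<le> 2 powr \<alpha> * 2 powr \<bar>\<beta>\<bar> * K * 1"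
      using z decay_exponent K by (intro mult_left_mono powr_le1) auto
    finally show ?thesis by simp
  qed (simp add: cesaro_integrand_def)
qed

lemma cesaro_integrand_uniformly_small:
  assumes "0 \<le> K" "0 < \<epsilon>"
  obtains \<rho> \<theta> where "\<rho> < 1" "0 < \<theta>"
    "\<And>h z. h holomorphic_on ball 0 1 \<Longrightarrow> h 0 = 0 \<Longrightarrow> growth_bound \<gamma> K h \<Longrightarrow>
       (\<And>w. cmod w \<le> \<rho> \<Longrightarrow> cmod (h w) \<le> \<theta>) \<Longrightarrow> z \<in> ball 0 1 \<Longrightarrow>
       (1 - (cmod z)^2) powr \<alpha> * cmod (cesaro_integrand \<beta> h z) \<le> \<epsilon>"
proof -
  define \<delta> where "\<delta> = \<alpha> - \<gamma> - max \<beta> 0"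
  define c where "c = 2 powr \<alpha> * 2 powr \<bar>\<beta>\<bar> * K"
  have "0 < \<delta>" unfolding \<delta>_def using decay_exponent by linarith
  then obtain \<eta> where \<eta>: "0 < \<eta>" "\<eta> < 1" "c * \<eta> powr \<delta> \<le> \<epsilon>"
    using exists_small_powr_le[of c \<epsilon> \<delta>] assms by (auto simp: c_def)
  define L where "L = 2 powr \<bar>\<beta>\<bar> * (1 - (1 - \<eta>)) powr (- max \<beta> 0)"
  define \<theta> where "\<theta> = \<epsilon> * (\<eta> / 2) / L"
  have L: "0 < L" using \<eta> by (simp add: L_def)
  show ?thesis
  proof (rule that[of "1 - \<eta> / 2" \<theta>])
    show "1 - \<eta> / 2 < 1" "0 < \<theta>"
      using \<eta> L assms by (auto simp: \<theta>_def)
    fix h :: "complex \<Rightarrow> complex" and z :: complex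
    assume hol: "h holomorphic_on ball 0 1" and h0: "h 0 = 0" and growth: "growth_bound \<gamma> K h"
      and small: "\<And>w. cmod w \<le> 1 - \<eta> / 2 \<Longrightarrow> cmod (h w) \<le> \<theta>" and z: "z \<in> ball 0 1"
    show "(1 - (cmod z)^2) powr \<alpha> * cmod (cesaro_integrand \<beta> h z) \<le> \<epsilon>"
    proof (cases "cmod z \<le> 1 - \<eta>")
      case True
      have "cmod (cesaro_integrand \<beta> h z) \<le> \<theta> / (\<eta> / 2) * L"
        unfolding L_def
        by (rule norm_cesaro_integrand_le_interior[OF hol h0]) (use \<eta> small True in auto)
      also have "\<dots> = \<epsilon>"
        using L \<eta> by (simp add: \<theta>_def)
      finally show ?thesis
        using bloch_weight_le_one[OF z, of \<alpha>] alpha_pos assms(2)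
          mult_mono[of "(1 - (cmod z)^2) powr \<alpha>" 1 "cmod (cesaro_integrand \<beta> h z)" \<epsilon>]
        by simp
    next
      case False
      then have "z \<noteq> 0" using \<eta> by auto
      then have "(1 - (cmod z)^2) powr \<alpha> * cmod (cesaro_integrand \<beta> h z) \<le> c * (1 - cmod z) powr \<delta>"
        using alpha_pos assms(1) unfolding c_def \<delta>_def
        by (intro cesaro_integrand_weighted_le[OF growth z]) auto
      also have "\<dots> \<le> c * \<eta> powr \<delta>"
        using False z \<open>0 < \<delta>\<close> assms(1) by (intro mult_left_mono powr_mono2) (auto simp: c_def)
      finally show ?thesis using \<eta>(3) by linarith
    qed
  qed
qed

lemma cesaro_tendsto_of_locally_uniform:
  assumes F: "\<And>n. F n holomorphic_on ball 0 1" "\<And>n. F n 0 = 0" "\<And>n. growth_bound \<gamma> K (F n)"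
    and f: "f holomorphic_on ball 0 1" "f 0 = 0" "growth_bound \<gamma> K f" and K: "0 \<le> K"
    and unif: "\<And>S. compact S \<Longrightarrow> S \<subseteq> ball 0 1 \<Longrightarrow> uniform_limit S F f sequentially"
  shows "(\<lambda>n. bloch_norm \<alpha> (\<lambda>z. cesaro \<beta> (F n) z - cesaro \<beta> f z)) \<longlonglongrightarrow> 0"
  unfolding tendsto_iff
proof (intro allI impI)
  fix \<epsilon> :: real assume "0 < \<epsilon>"
  then obtain \<rho> \<theta> where \<rho>: "\<rho> < 1" and \<theta>: "0 < \<theta>" and small:
    "\<And>h z. h holomorphic_on ball 0 1 \<Longrightarrow> h 0 = 0 \<Longrightarrow> growth_bound \<gamma> (K + K) h \<Longrightarrow>
       (\<And>w. cmod w \<le> \<rho> \<Longrightarrow> cmod (h w) \<le> \<theta>) \<Longrightarrow> z \<in> ball 0 1 \<Longrightarrow>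
       (1 - (cmod z)^2) powr \<alpha> * cmod (cesaro_integrand \<beta> h z) \<le> \<epsilon> / 2"
    using cesaro_integrand_uniformly_small[of "K + K" "\<epsilon> / 2"] K by auto
  have "uniform_limit (cball 0 \<rho>) F f sequentially"
    using \<rho> by (intro unif) auto
  then have "\<forall>\<^sub>F n in sequentially. \<forall>w\<in>cball 0 \<rho>. dist (F n w) (f w) < \<theta>"
    using \<theta> by (rule uniform_limitD)
  then show "\<forall>\<^sub>F n in sequentially. dist (bloch_norm \<alpha> (\<lambda>z. cesaro \<beta> (F n) z - cesaro \<beta> f z)) 0 < \<epsilon>"
  proof (rule eventually_mono)
    fix n assume close: "\<forall>w\<in>cball 0 \<rho>. dist (F n w) (f w) < \<theta>"
    have "bloch_norm \<alpha> (\<lambda>z. cesaro \<beta> (F n) z - cesaro \<beta> f z) \<le> \<epsilon> / 2"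
    proof (rule bloch_norm_cesaro_diff_le[OF F(1,2) f(1,2)])
      show "(1 - (cmod z)^2) powr \<alpha> * cmod (cesaro_integrand \<beta> (\<lambda>w. F n w - f w) z) \<le> \<epsilon> / 2"
        if "z \<in> ball 0 1" for z
        using close growth_bound_diff[OF F(3) f(3)] F(1,2) f(1,2) that
        by (intro small) (auto intro!: holomorphic_intros simp: dist_norm less_imp_le)
    qed
    moreover have "0 \<le> bloch_norm \<alpha> (\<lambda>z. cesaro \<beta> (F n) z - cesaro \<beta> f z)"
      using cesaro_in_bloch0_of_growth_bound[OF F(1,2,3) K] cesaro_in_bloch0_of_growth_bound[OF f K]
      by (intro bloch_norm_nonneg bloch_space_diff) (auto simp: bloch0_def)
    ultimately show "dist (bloch_norm \<alpha> (\<lambda>z. cesaro \<beta> (F n) z - cesaro \<beta> f z)) 0 < \<epsilon>"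
      using \<open>0 < \<epsilon>\<close> by simp
  qed
qed

lemma compact_op_cesaro: "compact_op \<alpha> (cesaro \<beta>)"
  unfolding compact_op_def
proof (intro conjI allI impI)
  show "op_on_bloch0 \<alpha> (cesaro \<beta>)"
    using bounded_op_cesaro by (simp add: bounded_op_def)
  fix s :: "nat \<Rightarrow> complex \<Rightarrow> complex"
  assume "(\<forall>n. s n \<in> bloch0 \<alpha>) \<and> (\<exists>M. \<forall>n. bloch_norm \<alpha> (s n) \<le> M)"
  then obtain M where s: "\<And>n. s n \<in> bloch0 \<alpha>" and M: "\<And>n. bloch_norm \<alpha> (s n) \<le> M" by blast
  define K where "K = max 1 (1 / \<gamma>) * M"
  have hol: "\<And>n. s n holomorphic_on ball 0 1" and s0: "\<And>n. s n 0 = 0"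
    using s by (auto simp: bloch0_def bloch_space_def)
  have K: "0 \<le> K"
    using M[of 0] bloch_norm_nonneg[of "s 0" \<alpha>] s by (auto simp: K_def bloch0_def)
  have growth: "growth_bound \<gamma> K (s n)" for n
  proof (rule growth_bound_mono)
    show "growth_bound \<gamma> (max 1 (1 / \<gamma>) * bloch_norm \<alpha> (s n)) (s n)"
      by (rule bloch0_growth_bound[OF s less_imp_le[OF alpha_pos] gamma_pos growth_exponent])
    show "max 1 (1 / \<gamma>) * bloch_norm \<alpha> (s n) \<le> K"
      unfolding K_def using M[of n] by (intro mult_left_mono) auto
  qed
  obtain f r where r: "strict_mono r" and f: "f holomorphic_on ball 0 1" "f 0 = 0" "growth_bound \<gamma> K f"
    and unif: "\<And>S. compact S \<Longrightarrow> S \<subseteq> ball 0 1 \<Longrightarrow> uniform_limit S (s \<circ> r) f sequentially"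
    using growth_bound_Montel[of s, OF hol s0 growth less_imp_le[OF gamma_pos] K] by metis
  have "(\<lambda>n. bloch_norm \<alpha> (\<lambda>z. cesaro \<beta> (s (r n)) z - cesaro \<beta> f z)) \<longlonglongrightarrow> 0"
    using unif hol s0 growth f K
    by (intro cesaro_tendsto_of_locally_uniform[where F = "s \<circ> r", simplified]) auto
  then show "\<exists>r g. strict_mono r \<and> g \<in> bloch0 \<alpha> \<and>
               (\<lambda>n. bloch_norm \<alpha> (\<lambda>z. cesaro \<beta> (s (r n)) z - g z)) \<longlonglongrightarrow> 0"
    using r cesaro_in_bloch0_of_growth_bound[OF f K] by blast
qed

end

section \<open>Compact operators have essential norm zero\<close>

lemma op_on_bloch0_cmult:
  assumes T: "op_on_bloch0 \<alpha> T"
  shows "op_on_bloch0 \<alpha> (\<lambda>f z. c * T f z)"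
  unfolding op_on_bloch0_def
proof (intro conjI ballI allI impI)
  fix f assume "f \<in> bloch0 \<alpha>"
  then have "T f \<in> bloch0 \<alpha>" using T unfolding op_on_bloch0_def by blast
  then show "(\<lambda>z. c * T f z) \<in> bloch0 \<alpha>"
    using bloch0_lincomb[of "T f" \<alpha> "T f" c 0] by simp
next
  fix f g :: "complex \<Rightarrow> complex" and z :: complex
  assume fg: "f \<in> bloch0 \<alpha>" "g \<in> bloch0 \<alpha>" "\<forall>z\<in>ball 0 1. f z = g z" and z: "z \<in> ball 0 1"
  have "\<forall>f\<in>bloch0 \<alpha>. \<forall>g\<in>bloch0 \<alpha>. (\<forall>z\<in>ball 0 1. f z = g z) \<longrightarrow> (\<forall>z\<in>ball 0 1. T f z = T g z)"
    using T unfolding op_on_bloch0_def by (rule conjunct1[OF conjunct2])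
  then have "T f z = T g z" using fg z by blast
  then show "c * T f z = c * T g z" by simp
next
  fix f g :: "complex \<Rightarrow> complex" and a b z :: complex
  assume "f \<in> bloch0 \<alpha>" "g \<in> bloch0 \<alpha>" "z \<in> ball 0 1"
  then have "T (\<lambda>w. a * f w + b * g w) z = a * T f z + b * T g z"
    using T unfolding op_on_bloch0_def by blast
  then show "c * T (\<lambda>w. a * f w + b * g w) z = a * (c * T f z) + b * (c * T g z)"
    by (simp add: algebra_simps)
qed

lemma compact_op_cmult:
  assumes K: "compact_op \<alpha> K"
  shows "compact_op \<alpha> (\<lambda>f z. c * K f z)"
  unfolding compact_op_def
proof (intro conjI allI impI)
  have Kop: "op_on_bloch0 \<alpha> K" using K by (simp add: compact_op_def)
  then show "op_on_bloch0 \<alpha> (\<lambda>f z. c * K f z)" by (rule op_on_bloch0_cmult)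
  fix s :: "nat \<Rightarrow> complex \<Rightarrow> complex"
  assume s: "(\<forall>n. s n \<in> bloch0 \<alpha>) \<and> (\<exists>M. \<forall>n. bloch_norm \<alpha> (s n) \<le> M)"
  then obtain r g where r: "strict_mono r" and g: "g \<in> bloch0 \<alpha>"
    and lim: "(\<lambda>n. bloch_norm \<alpha> (\<lambda>z. K (s (r n)) z - g z)) \<longlonglongrightarrow> 0"
    using K unfolding compact_op_def by blast
  have diff: "(\<lambda>z. K (s (r n)) z - g z) \<in> bloch_space \<alpha>" for n
    using s g Kop by (intro bloch_space_diff) (auto simp: op_on_bloch0_def bloch0_def)
  have eq: "(\<lambda>z. c * K (s (r n)) z - c * g z) = (\<lambda>z. c * (K (s (r n)) z - g z))" for n
    by (simp add: right_diff_distrib)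
  have upper: "bloch_norm \<alpha> (\<lambda>z. c * K (s (r n)) z - c * g z) \<le> cmod c * bloch_norm \<alpha> (\<lambda>z. K (s (r n)) z - g z)" for n
    unfolding eq by (rule bloch_norm_cmult_le[OF diff])
  have lower: "0 \<le> bloch_norm \<alpha> (\<lambda>z. c * K (s (r n)) z - c * g z)" for n
    unfolding eq using bloch_space_lincomb(1)[OF diff[of n] diff[of n], of c 0] by (simp add: bloch_norm_nonneg)
  have "(\<lambda>n. cmod c * bloch_norm \<alpha> (\<lambda>z. K (s (r n)) z - g z)) \<longlonglongrightarrow> 0"
    using tendsto_mult_right_zero[OF lim] by simp
  then have "(\<lambda>n. bloch_norm \<alpha> (\<lambda>z. c * K (s (r n)) z - c * g z)) \<longlonglongrightarrow> 0"
    by (rule tendsto_sandwich[OF always_eventually always_eventually tendsto_const, rotated 2])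
       (use lower upper in blast)+
  moreover have "(\<lambda>z. c * g z) \<in> bloch0 \<alpha>"
    using bloch0_lincomb[OF g g, of c 0] by simp
  ultimately show "\<exists>r g. strict_mono r \<and> g \<in> bloch0 \<alpha> \<and>
                     (\<lambda>n. bloch_norm \<alpha> (\<lambda>z. c * K (s (r n)) z - g z)) \<longlonglongrightarrow> 0"
    using r by blast
qed

lemma compact_op_bounded:
  assumes K: "compact_op \<alpha> K"
  obtains B where "\<And>f. f \<in> bloch0 \<alpha> \<Longrightarrow> bloch_norm \<alpha> f \<le> 1 \<Longrightarrow> bloch_norm \<alpha> (K f) \<le> B"
proof (rule ccontr)
  assume "\<not> thesis"
  with that have "\<exists>f. f \<in> bloch0 \<alpha> \<and> bloch_norm \<alpha> f \<le> 1 \<and> real n < bloch_norm \<alpha> (K f)" for n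
    by (meson not_le)
  then obtain s where s: "\<And>n. s n \<in> bloch0 \<alpha>" "\<And>n. bloch_norm \<alpha> (s n) \<le> 1"
    and large: "\<And>n. real n < bloch_norm \<alpha> (K (s n))"
    by metis
  then obtain r g where r: "strict_mono r" and g: "g \<in> bloch0 \<alpha>"
    and lim: "(\<lambda>n. bloch_norm \<alpha> (\<lambda>z. K (s (r n)) z - g z)) \<longlonglongrightarrow> 0"
    using K unfolding compact_op_def by blast
  obtain N where N: "\<And>n. N \<le> n \<Longrightarrow> \<bar>bloch_norm \<alpha> (\<lambda>z. K (s (r n)) z - g z)\<bar> < 1"
    using LIMSEQ_D[OF lim, of 1] by auto
  define n where "n = max N (nat \<lceil>1 + bloch_norm \<alpha> g\<rceil>)"
  have Ksn: "K (s (r n)) \<in> bloch_space \<alpha>"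
    using K s(1) by (simp add: compact_op_def op_on_bloch0_def bloch0_def)
  have "real (r n) < bloch_norm \<alpha> (K (s (r n)))"
    by (rule large)
  also have "\<dots> \<le> bloch_norm \<alpha> (\<lambda>z. K (s (r n)) z - g z) + bloch_norm \<alpha> g"
    using Ksn g by (intro bloch_norm_le_diff_add) (auto simp: bloch0_def)
  also have "\<dots> < 1 + bloch_norm \<alpha> g"
    using N[of n] by (simp add: n_def abs_less_iff)
  also have "\<dots> \<le> real n"
    by (simp add: n_def) linarith
  also have "\<dots> \<le> real (r n)"
    using seq_suble[OF r] by simp
  finally show False by simp
qed

lemma op_norm_nonneg:
  assumes T: "bounded_op \<alpha> T" and K: "compact_op \<alpha> K"
  shows "0 \<le> op_norm \<alpha> (\<lambda>f z. T f z + K f z)"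
proof -
  define S where "S = {bloch_norm \<alpha> (\<lambda>z. T f z + K f z) | f. f \<in> bloch0 \<alpha> \<and> bloch_norm \<alpha> f \<le> 1}"
  obtain C where C: "\<And>f. f \<in> bloch0 \<alpha> \<Longrightarrow> bloch_norm \<alpha> (T f) \<le> C * bloch_norm \<alpha> f"
    using T unfolding bounded_op_def by blast
  obtain B where B: "\<And>f. f \<in> bloch0 \<alpha> \<Longrightarrow> bloch_norm \<alpha> f \<le> 1 \<Longrightarrow> bloch_norm \<alpha> (K f) \<le> B"
    using compact_op_bounded[OF K] by blast
  have images: "T f \<in> bloch_space \<alpha>" "K f \<in> bloch_space \<alpha>" if "f \<in> bloch0 \<alpha>" for f
    using T K that by (auto simp: bounded_op_def compact_op_def op_on_bloch0_def bloch0_def)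
  have "bloch_norm \<alpha> (\<lambda>z. T f z + K f z) \<le> \<bar>C\<bar> + B"
    if f: "f \<in> bloch0 \<alpha>" "bloch_norm \<alpha> f \<le> 1" for f
  proof -
    have N: "0 \<le> bloch_norm \<alpha> f"
      using f(1) by (simp add: bloch0_def bloch_norm_nonneg)
    have "bloch_norm \<alpha> (T f) \<le> C * bloch_norm \<alpha> f"
      by (rule C[OF f(1)])
    also have "\<dots> \<le> \<bar>C\<bar> * bloch_norm \<alpha> f"
      using N by (intro mult_right_mono) auto
    also have "\<dots> \<le> \<bar>C\<bar> * 1"
      using f(2) by (intro mult_left_mono) auto
    finally have "bloch_norm \<alpha> (T f) \<le> \<bar>C\<bar>" by simp
    then show ?thesis
      using bloch_norm_add_le[OF images[OF f(1)]] B[OF f] by linarith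
  qed
  (* Sup of an unbounded set of reals is unspecified, so boundedness is needed even here *)
  then have "bdd_above S"
    unfolding S_def by (intro bdd_aboveI[where M = "\<bar>C\<bar> + B"]) auto
  moreover have "bloch_norm \<alpha> (\<lambda>z. T (\<lambda>z. 0) z + K (\<lambda>z. 0) z) \<in> S"
    unfolding S_def using bloch0_zero[of \<alpha>] by auto
  ultimately have "bloch_norm \<alpha> (\<lambda>z. T (\<lambda>z. 0) z + K (\<lambda>z. 0) z) \<le> Sup S"
    by (rule cSup_upper[rotated])
  moreover have "0 \<le> bloch_norm \<alpha> (\<lambda>z. T (\<lambda>z. 0) z + K (\<lambda>z. 0) z)"
    using images[OF bloch0_zero(1)] by (intro bloch_norm_nonneg bloch_space_add)
  ultimately show ?thesis
    by (simp add: op_norm_def S_def)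
qed

lemma ess_norm_eq_0_if_compact:
  assumes T: "bounded_op \<alpha> T" and "compact_op \<alpha> T"
  shows "ess_norm \<alpha> T = 0"
  unfolding ess_norm_def
proof (rule cInf_eq_minimum)
  have "{bloch_norm \<alpha> (\<lambda>z. T f z + (-1) * T f z) | f. f \<in> bloch0 \<alpha> \<and> bloch_norm \<alpha> f \<le> 1} = {0}"
    using bloch0_zero[of \<alpha>] by auto
  then have "op_norm \<alpha> (\<lambda>f z. T f z + (-1) * T f z) = 0"
    by (simp add: op_norm_def)
  then show "0 \<in> {op_norm \<alpha> (\<lambda>f z. T f z + K f z) |K. compact_op \<alpha> K}"
    using compact_op_cmult[OF \<open>compact_op \<alpha> T\<close>, of "-1"]
    by (intro CollectI exI[of _ "\<lambda>f z. (-1) * T f z"]) simp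
  fix x assume "x \<in> {op_norm \<alpha> (\<lambda>f z. T f z + K f z) |K. compact_op \<alpha> K}"
  then show "0 \<le> x" using op_norm_nonneg[OF T] by blast
qed

theorem theorem4p3:
  fixes \<alpha> \<beta> :: real
  assumes "\<alpha> > 0"
    and "(\<beta> < \<alpha> \<and> \<alpha> < 1) \<or> (\<beta> < 1 \<and> 1 < \<alpha>) \<or> (\<beta> < \<alpha> \<and> \<alpha> = 1)"
  shows "bounded_op \<alpha> (cesaro \<beta>) \<and> ess_norm \<alpha> (cesaro \<beta>) = 0"
proof -
  (* the hypothesis says exactly that the interval of admissible exponents,
     max (alpha - 1) 0 < gamma < alpha - max beta 0, is nonempty; take its midpoint *)
  define \<gamma> where "\<gamma> = (max (\<alpha> - 1) 0 + (\<alpha> - max \<beta> 0)) / 2"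
  have gap: "max (\<alpha> - 1) 0 < \<alpha> - max \<beta> 0"
    using assms by (auto simp: max_def)
  have "0 < \<gamma>" "\<alpha> \<le> \<gamma> + 1" "\<gamma> + max \<beta> 0 < \<alpha>"
    using gap unfolding \<gamma>_def by (auto simp: max_def field_simps)
  then have "bounded_op \<alpha> (cesaro \<beta>)" "compact_op \<alpha> (cesaro \<beta>)"
    using bounded_op_cesaro compact_op_cesaro \<open>\<alpha> > 0\<close> by blast+
  then show ?thesis
    using ess_norm_eq_0_if_compact by blast
qed

end
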